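(* Let $n=p_1^{\alpha_1}p_2^{\alpha_2}\cdots p_t^{\alpha_t}$ with primes $p_1<\cdots<p_t$, $t\ge1$, and all $\alpha_i\ge1$. Then $$\mathrm{IR}(X_n)\le\left(1+2\cdot\frac{p_1}{p_t}\cdot\frac{1}{p_1^{\alpha_1-1}p_2^{\alpha_2-1}\cdots p_t^{\alpha_t-1}}\right)\alpha(X_n).$$
   Context: $X_n$ is the graph on $\{0,\dots,n-1\}$ with $a,b$ adjacent iff $\gcd(a-b,n)=1$. $\alpha(G)$ is the independence number. A set $S$ is irredundant if every $v\in S$ has a private neighbor, i.e. a vertex in $N[v]\setminus N[S\setminus\{v\}]$ (closed neighborhoods); $\mathrm{IR}(G)$ is the maximum size of an irredundant set. *)

theory Defs
  imports Complex_Main "HOL-Computational_Algebra.Primes"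
begin

text \<open>The graph X_n on {0,...,n-1}: a, b adjacent iff gcd(a-b, n) = 1.
  For n \<ge> 2 this relation is irreflexive since gcd(0,n) = n.\<close>
definition Xadj :: "nat \<Rightarrow> nat \<Rightarrow> nat \<Rightarrow> bool" where
  "Xadj n a b \<longleftrightarrow> a < n \<and> b < n \<and> gcd (int a - int b) (int n) = 1"

definition Xverts :: "nat \<Rightarrow> nat set" where
  "Xverts n = {0..<n}"

definition closed_nbhd :: "nat \<Rightarrow> nat \<Rightarrow> nat set" where
  "closed_nbhd n v = {v} \<union> {u \<in> Xverts n. Xadj n v u}"

definition closed_nbhd_set :: "nat \<Rightarrow> nat set \<Rightarrow> nat set" where
  "closed_nbhd_set n S = (\<Union>v\<in>S. closed_nbhd n v)"

definition independent :: "nat \<Rightarrow> nat set \<Rightarrow> bool" where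
  "independent n S \<longleftrightarrow> S \<subseteq> Xverts n \<and> (\<forall>a\<in>S. \<forall>b\<in>S. \<not> Xadj n a b)"

definition irredundant :: "nat \<Rightarrow> nat set \<Rightarrow> bool" where
  "irredundant n S \<longleftrightarrow> S \<subseteq> Xverts n \<and>
     (\<forall>v\<in>S. closed_nbhd n v - closed_nbhd_set n (S - {v}) \<noteq> {})"

definition alpha_X :: "nat \<Rightarrow> nat" where
  "alpha_X n = Max (card ` {S. independent n S})"

definition IR_X :: "nat \<Rightarrow> nat" where
  "IR_X n = Max (card ` {S. irredundant n S})"

end

theory Submission
  imports Defs
begin

text \<open>Let \<open>p\<^sub>1\<close> and \<open>q\<close> be the smallest and largest prime factors of \<open>n\<close> and \<open>R\<close> the product of the
  prime factors other than \<open>q\<close>. The multiples of \<open>p\<^sub>1\<close> are independent, so \<open>\<alpha>(X\<^sub>n) \<ge> n/p\<^sub>1\<close>.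
  Conversely, the vertices of an irredundant set \<open>S\<close> without a neighbour in \<open>S\<close> form an
  independent set, which has at most \<open>n/p\<^sub>1\<close> elements because its translates by
  \<open>0, \<dots>, p\<^sub>1 - 1\<close> are pairwise disjoint. Every other vertex of \<open>S\<close> has a private neighbour
  outside \<open>S\<close>, and this allows at most two of them in each residue class modulo \<open>R\<close>:
  given three, the privacy of one of them forces the other two to agree modulo \<open>q\<close> as well,
  so these two have the same neighbourhood, contradicting privacy again. Hence
  \<open>IR(X\<^sub>n) \<le> n/p\<^sub>1 + 2R\<close>, and \<open>n = q R \<prod> p\<^sub>i\<^bsup>\<alpha>\<^sub>i-1\<^esup>\<close> turns this into the claimed bound.\<close>

lemma gcd_eq_1_iff_no_prime_factor_dvd:
  fixes x :: int
  assumes "n \<noteq> 0"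
  shows "gcd x (int n) = 1 \<longleftrightarrow> (\<forall>p\<in>prime_factors n. \<not> int p dvd x)"
proof
  assume g: "gcd x (int n) = 1"
  show "\<forall>p\<in>prime_factors n. \<not> int p dvd x"
  proof (intro ballI notI)
    fix p assume p: "p \<in> prime_factors n" and "int p dvd x"
    moreover have "int p dvd int n" using p by (simp add: in_prime_factors_imp_dvd)
    ultimately have "int p dvd gcd x (int n)" by (blast intro: gcd_greatest)
    then have "p = 1" using g by simp
    moreover have "prime p" using p by (rule in_prime_factors_imp_prime)
    ultimately show False by simp
  qed
next
  assume no_dvd: "\<forall>p\<in>prime_factors n. \<not> int p dvd x"
  show "gcd x (int n) = 1"
  proof (rule ccontr)
    assume "gcd x (int n) \<noteq> 1"
    then have "\<not> is_unit (gcd x (int n))" by simp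
    moreover have "gcd x (int n) \<noteq> 0" using assms by simp
    ultimately obtain q where q: "prime q" "q dvd gcd x (int n)"
      using prime_divisor_exists by blast
    have q_eq: "int (nat q) = q" using q(1) by (simp add: prime_ge_0_int)
    have "nat q dvd n" using q(2) q_eq by (metis dvd_gcdD2 int_dvd_int_iff)
    then have "nat q \<in> prime_factors n" using q(1) assms by (simp add: prime_factorsI)
    moreover have "int (nat q) dvd x" using q(2) q_eq by simp
    ultimately show False using no_dvd by blast
  qed
qed

lemma Min_prime_factors_in:
  fixes n :: nat
  assumes "n \<ge> 2"
  shows "Min (prime_factors n) \<in> prime_factors n"
proof -
  obtain p where "prime p" "p dvd n" using prime_factor_nat[of n] assms by auto
  then have "p \<in> prime_factors n" using assms by (simp add: prime_factorsI)
  then show ?thesis by (intro Min_in) auto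
qed

lemma in_prime_factors_imp_gt_0: "(p :: nat) \<in> prime_factors n \<Longrightarrow> p > 0"
  using in_prime_factors_imp_prime prime_gt_0_nat by blast

lemma gcd_eq_1_if_abs_less_Min_prime_factors:
  assumes "n \<ge> 2" and "d \<noteq> 0" and "\<bar>d\<bar> < int (Min (prime_factors n))"
  shows "gcd d (int n) = 1"
proof -
  have "\<not> int p dvd d" if "p \<in> prime_factors n" for p
  proof
    assume "int p dvd d"
    then have "int p \<le> \<bar>d\<bar>" using dvd_imp_le_int[OF \<open>d \<noteq> 0\<close>] by fastforce
    moreover have "Min (prime_factors n) \<le> p" using that by simp
    ultimately show False using assms(3) by linarith
  qed
  then show ?thesis using gcd_eq_1_iff_no_prime_factor_dvd assms(1) by simp
qed

lemma Xadj_iff_prime_factors: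
  assumes "n \<noteq> 0"
  shows "Xadj n a b \<longleftrightarrow> a < n \<and> b < n \<and> (\<forall>p\<in>prime_factors n. \<not> int p dvd int a - int b)"
  using gcd_eq_1_iff_no_prime_factor_dvd[OF assms] by (auto simp: Xadj_def)

lemma Xadj_eq_if_prime_factors_dvd:
  assumes "n \<noteq> 0" and "a < n" and "b < n" and "\<forall>p\<in>prime_factors n. int p dvd int a - int b"
  shows "Xadj n a x \<longleftrightarrow> Xadj n b x"
proof -
  have "int p dvd int a - int x \<longleftrightarrow> int p dvd int b - int x" if "int p dvd int a - int b" for p
    using that dvd_add_right_iff[of "int p" "int a - int b" "int b - int x"] by simp
  then show ?thesis using assms by (auto simp: Xadj_iff_prime_factors)
qed

lemma dvd_diff_if_mod_eq:
  assumes "(u :: nat) mod m = v mod m" and "p dvd m"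
  shows "int p dvd int u - int v"
proof -
  have "int u mod int m = int v mod int m" using assms(1) by (metis of_nat_mod)
  then have "int m dvd int u - int v" by (simp add: mod_eq_dvd_iff)
  then show ?thesis using assms(2) by (meson dvd_trans int_dvd_int_iff)
qed

lemma finite_independent_sets: "finite {S. independent n S}"
  by (rule finite_subset[of _ "Pow {0..<n}"]) (auto simp: independent_def Xverts_def)

lemma card_mult_Min_prime_factors_le_if_independent:
  assumes n: "n \<ge> 2" and I: "independent n I"
  shows "card I * Min (prime_factors n) \<le> n"
proof -
  define p\<^sub>1 where "p\<^sub>1 = Min (prime_factors n)"
  have I_lt: "i < n" if "i \<in> I" for i using I that by (auto simp: independent_def Xverts_def)
  have "inj_on (\<lambda>(i, c). (i + c) mod n) (I \<times> {0..<p\<^sub>1})"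
  proof (rule inj_onI, clarsimp)
    fix i c i' c'
    assume i: "i \<in> I" "i' \<in> I" and c: "c < p\<^sub>1" "c' < p\<^sub>1" and eq: "(i + c) mod n = (i' + c') mod n"
    have "int (i + c) mod int n = int (i' + c') mod int n" using eq by (metis of_nat_mod)
    then have dvd: "int n dvd (int i - int i') - (int c' - int c)"
      by (simp add: mod_eq_dvd_iff algebra_simps)
    have "c = c'"
    proof (rule ccontr)
      assume "c \<noteq> c'"
      then have "gcd (int c' - int c) (int n) = 1"
        using gcd_eq_1_if_abs_less_Min_prime_factors[OF n] c unfolding p\<^sub>1_def by auto
      then have "gcd (int i - int i') (int n) = 1" using dvd by (metis gcd_red_int mod_eq_dvd_iff)
      then have "Xadj n i i'" using i I_lt by (simp add: Xadj_def)
      then show False using I i by (auto simp: independent_def)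
    qed
    with dvd have "int i mod int n = int i' mod int n" by (simp add: mod_eq_dvd_iff)
    then have "i mod n = i' mod n" by (metis of_nat_eq_iff of_nat_mod)
    then have "i = i'" using I_lt i by simp
    with \<open>c = c'\<close> show "i = i' \<and> c = c'" by simp
  qed
  moreover have "(\<lambda>(i, c). (i + c) mod n) ` (I \<times> {0..<p\<^sub>1}) \<subseteq> {0..<n}" using n by auto
  ultimately have "card (I \<times> {0..<p\<^sub>1}) \<le> card {0..<n}"
    by (rule card_inj_on_le) auto
  then show ?thesis by (simp add: card_cartesian_product p\<^sub>1_def)
qed

lemma alpha_X_ge:
  assumes n: "n \<ge> 2"
  shows "n div Min (prime_factors n) \<le> alpha_X n"
proof -
  define p\<^sub>1 where "p\<^sub>1 = Min (prime_factors n)"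
  have "p\<^sub>1 \<in> prime_factors n" using Min_prime_factors_in[OF n] by (simp add: p\<^sub>1_def)
  then have p\<^sub>1: "p\<^sub>1 > 1" "p\<^sub>1 dvd n"
    using prime_gt_1_nat in_prime_factors_imp_prime in_prime_factors_imp_dvd by blast+
  define A where "A = (\<lambda>k. k * p\<^sub>1) ` {0..<n div p\<^sub>1}"
  have "card A = n div p\<^sub>1"
    using p\<^sub>1 by (simp add: A_def card_image inj_on_def)
  moreover have "independent n A"
    unfolding independent_def Xverts_def
  proof (intro conjI ballI)
    show "A \<subseteq> {0..<n}"
    proof
      fix x assume "x \<in> A"
      then obtain k where "k < n div p\<^sub>1" "x = k * p\<^sub>1" by (auto simp: A_def)
      then have "x < n div p\<^sub>1 * p\<^sub>1" using p\<^sub>1(1) by simp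
      also have "\<dots> \<le> n" by (rule div_times_less_eq_dividend)
      finally show "x \<in> {0..<n}" by simp
    qed
    fix a b assume "a \<in> A" "b \<in> A"
    then have "int p\<^sub>1 dvd int a - int b" by (auto simp: A_def algebra_simps)
    moreover have "int p\<^sub>1 dvd int n" using p\<^sub>1(2) by simp
    ultimately have p\<^sub>1_dvd: "int p\<^sub>1 dvd gcd (int a - int b) (int n)" by (blast intro: gcd_greatest)
    have "gcd (int a - int b) (int n) \<noteq> 1"
    proof
      assume "gcd (int a - int b) (int n) = 1"
      with p\<^sub>1_dvd have "p\<^sub>1 = 1" by simp
      with p\<^sub>1(1) show False by simp
    qed
    then show "\<not> Xadj n a b" by (simp add: Xadj_def)
  qed
  ultimately have "n div p\<^sub>1 \<in> card ` {S. independent n S}" by (auto simp: image_iff)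
  then show ?thesis
    using finite_independent_sets by (auto simp: alpha_X_def p\<^sub>1_def intro!: Max_ge)
qed

definition private_neighbour :: "nat \<Rightarrow> nat set \<Rightarrow> nat \<Rightarrow> nat \<Rightarrow> bool" where
  "private_neighbour n S v w \<longleftrightarrow> Xadj n v w \<and> (\<forall>u\<in>S - {v}. \<not> Xadj n u w)"

lemma irredundant_private_neighbour:
  assumes S: "irredundant n S" and "v \<in> S" and "\<exists>u\<in>S. u \<noteq> v \<and> Xadj n u v"
  shows "\<exists>w. private_neighbour n S v w"
proof -
  obtain u where u: "u \<in> S" "u \<noteq> v" "Xadj n u v" using assms(3) by blast
  obtain w where w: "w \<in> closed_nbhd n v" "w \<notin> closed_nbhd_set n (S - {v})"
    using S \<open>v \<in> S\<close> unfolding irredundant_def by blast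
  have "v \<in> closed_nbhd n u" using u by (auto simp: closed_nbhd_def Xverts_def Xadj_def)
  then have "w \<noteq> v" using w(2) u by (auto simp: closed_nbhd_set_def)
  then have "Xadj n v w" using w(1) by (auto simp: closed_nbhd_def)
  moreover have "w \<in> Xverts n" using calculation by (simp add: Xadj_def Xverts_def)
  ultimately show ?thesis
    using w(2) by (auto simp: private_neighbour_def closed_nbhd_set_def closed_nbhd_def)
qed

lemma private_neighbour_dvd:
  assumes "n \<noteq> 0" and w: "private_neighbour n S v w" and u: "u \<in> S" "u \<noteq> v" "u < n"
    and uv: "\<forall>p\<in>prime_factors n - {q}. int p dvd int u - int v"
  shows "int q dvd int u - int w"
proof -
  have vw: "Xadj n v w" and "\<not> Xadj n u w" using w u by (auto simp: private_neighbour_def)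
  then obtain p where p: "p \<in> prime_factors n" "int p dvd int u - int w"
    using u by (auto simp: Xadj_iff_prime_factors[OF \<open>n \<noteq> 0\<close>])
  show ?thesis
  proof (cases "p = q")
    case False
    then have "int p dvd int u - int v" using p(1) uv by blast
    from dvd_diff[OF p(2) this] have "int p dvd int v - int w" by simp
    then show ?thesis using vw p(1) by (auto simp: Xadj_iff_prime_factors[OF \<open>n \<noteq> 0\<close>])
  qed (use p in simp)
qed

lemma not_three_private_neighbours_mod:
  assumes "n \<noteq> 0" and S: "S \<subseteq> {0..<n}" and R: "\<forall>p\<in>prime_factors n - {q}. p dvd R"
    and uvv': "u \<in> S" "v \<in> S" "v' \<in> S" "u \<noteq> v" "u \<noteq> v'" "v \<noteq> v'"
    and mod_eq: "u mod R = v mod R" "v' mod R = v mod R"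
    and w: "private_neighbour n S v w" and w': "private_neighbour n S v' w'"
  shows False
proof -
  have congruent: "\<forall>p\<in>prime_factors n - {q}. int p dvd int x - int y"
    if "x mod R = y mod R" for x y
    using that R by (auto intro: dvd_diff_if_mod_eq)
  have "int q dvd int u - int w" "int q dvd int v' - int w"
    using private_neighbour_dvd[OF \<open>n \<noteq> 0\<close> w] congruent mod_eq uvv' S by auto
  from dvd_diff[OF this] have "int q dvd int u - int v'" by simp
  moreover have "\<forall>p\<in>prime_factors n - {q}. int p dvd int u - int v'"
    using congruent mod_eq by simp
  ultimately have "\<forall>p\<in>prime_factors n. int p dvd int u - int v'" by blast
  moreover have "u < n" "v' < n" using uvv' S by auto
  ultimately have "Xadj n u w' \<longleftrightarrow> Xadj n v' w'"
    using Xadj_eq_if_prime_factors_dvd[OF \<open>n \<noteq> 0\<close>] by blast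
  then show False using w' uvv' by (auto simp: private_neighbour_def)
qed

lemma card_le_mult_card_if_fibres_le:
  assumes "finite A" and "finite B" and "f ` A \<subseteq> B" and "\<And>b. card {a\<in>A. f a = b} \<le> k"
  shows "card A \<le> k * card B"
proof -
  have "A = (\<Union>b\<in>B. {a\<in>A. f a = b})" using assms(3) by auto
  then have "card A = card (\<Union>b\<in>B. {a\<in>A. f a = b})" by simp
  also have "\<dots> \<le> (\<Sum>b\<in>B. card {a\<in>A. f a = b})" using assms(2) by (rule card_UN_le)
  also have "\<dots> \<le> (\<Sum>b\<in>B. k)" by (intro sum_mono assms(4))
  finally show ?thesis by (simp add: mult.commute)
qed

lemma card_le_2_if_no_three_distinct:
  assumes "finite A" and "\<And>a b c. a \<in> A \<Longrightarrow> b \<in> A \<Longrightarrow> c \<in> A \<Longrightarrow> a \<noteq> b \<Longrightarrow> a \<noteq> c \<Longrightarrow> b \<noteq> c \<Longrightarrow> False"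
  shows "card A \<le> 2"
proof (rule ccontr)
  assume "\<not> card A \<le> 2"
  then have "3 \<le> card A" by simp
  then obtain B where B: "B \<subseteq> A" "card B = 3" by (rule obtain_subset_with_card_n)
  then obtain a b c where "B = {a, b, c}" "a \<noteq> b" "b \<noteq> c" "a \<noteq> c"
    unfolding card_3_iff by blast
  then show False using assms(2)[of a b c] B(1) by blast
qed

lemma card_non_isolated_le_if_irredundant:
  assumes n: "n \<ge> 2" and S: "irredundant n S" and q: "q \<in> prime_factors n"
  shows "card {v\<in>S. \<exists>u\<in>S. u \<noteq> v \<and> Xadj n u v} \<le> 2 * \<Prod>(prime_factors n - {q})"
proof -
  define J where "J = {v\<in>S. \<exists>u\<in>S. u \<noteq> v \<and> Xadj n u v}"
  define R where "R = \<Prod>(prime_factors n - {q})"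
  have "n \<noteq> 0" using n by simp
  have S_lt: "S \<subseteq> {0..<n}" using S by (simp add: irredundant_def Xverts_def)
  have R_pos: "R > 0" unfolding R_def by (intro prod_pos) (auto intro: in_prime_factors_imp_gt_0)
  have R_dvd: "\<forall>p\<in>prime_factors n - {q}. p dvd R" unfolding R_def by auto
  have has_private_neighbour: "\<exists>w. private_neighbour n S v w" if "v \<in> J" for v
    using irredundant_private_neighbour[OF S] that by (auto simp: J_def)
  have fibres: "card {v\<in>J. v mod R = k} \<le> 2" for k
  proof (rule card_le_2_if_no_three_distinct)
    show "finite {v\<in>J. v mod R = k}" using S_lt by (auto simp: J_def intro: finite_subset)
    fix u v v' assume mem: "u \<in> {v\<in>J. v mod R = k}" "v \<in> {v\<in>J. v mod R = k}"
      "v' \<in> {v\<in>J. v mod R = k}" and distinct: "u \<noteq> v" "u \<noteq> v'" "v \<noteq> v'"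
    then have "v \<in> J" "v' \<in> J" by simp_all
    then obtain w w' where "private_neighbour n S v w" "private_neighbour n S v' w'"
      using has_private_neighbour by blast
    moreover have "u \<in> S" "v \<in> S" "v' \<in> S" "u mod R = v mod R" "v' mod R = v mod R"
      using mem by (auto simp: J_def)
    ultimately show False
      using not_three_private_neighbours_mod[OF \<open>n \<noteq> 0\<close> S_lt R_dvd] distinct by blast
  qed
  have "finite J" using S_lt by (auto simp: J_def intro: finite_subset)
  moreover have "(\<lambda>v. v mod R) ` J \<subseteq> {0..<R}" using R_pos by auto
  ultimately have "card J \<le> 2 * card {0..<R}"
    using card_le_mult_card_if_fibres_le fibres by blast
  then show ?thesis by (simp add: J_def R_def)
qed

lemma finite_irredundant_sets: "finite {S. irredundant n S}"
  by (rule finite_subset[of _ "Pow {0..<n}"]) (auto simp: irredundant_def Xverts_def)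

lemma IR_X_le:
  assumes n: "n \<ge> 2" and q: "q \<in> prime_factors n"
  shows "IR_X n \<le> n div Min (prime_factors n) + 2 * \<Prod>(prime_factors n - {q})"
  unfolding IR_X_def
proof (rule Max.boundedI)
  show "finite (card ` {S. irredundant n S})" using finite_irredundant_sets by simp
  have "irredundant n {}" by (simp add: irredundant_def)
  then show "card ` {S. irredundant n S} \<noteq> {}" by blast
next
  fix k assume "k \<in> card ` {S. irredundant n S}"
  then obtain S where S: "irredundant n S" and k: "k = card S" by blast
  define J where "J = {v\<in>S. \<exists>u\<in>S. u \<noteq> v \<and> Xadj n u v}"
  have finite_S: "finite S" using S by (auto simp: irredundant_def Xverts_def intro: finite_subset)
  have "independent n (S - J)"
    unfolding independent_def
  proof (intro conjI ballI notI)
    show "S - J \<subseteq> Xverts n" using S by (auto simp: irredundant_def)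
    fix a b assume ab: "a \<in> S - J" "b \<in> S - J" "Xadj n a b"
    moreover from ab(3) have "a \<noteq> b" using n by (auto simp: Xadj_def)
    ultimately show False by (auto simp: J_def)
  qed
  then have "card (S - J) \<le> n div Min (prime_factors n)"
    using card_mult_Min_prime_factors_le_if_independent[OF n]
      in_prime_factors_imp_gt_0[OF Min_prime_factors_in[OF n]]
    by (simp add: less_eq_div_iff_mult_less_eq)
  moreover have "card J \<le> 2 * \<Prod>(prime_factors n - {q})"
    unfolding J_def using card_non_isolated_le_if_irredundant[OF n S q] .
  moreover have "card S = card (S - J) + card J"
    using finite_S by (simp add: J_def card_Diff_subset card_mono)
  ultimately show "k \<le> n div Min (prime_factors n) + 2 * \<Prod>(prime_factors n - {q})"
    using k by linarith
qed

lemma prod_prime_factors_pred_mult: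
  assumes "(n :: nat) \<noteq> 0"
  shows "n = (\<Prod>p\<in>prime_factors n. p ^ (multiplicity p n - 1)) * \<Prod>(prime_factors n)"
proof -
  have "p ^ multiplicity p n = p ^ (multiplicity p n - 1) * p" if "p \<in> prime_factors n" for p
    using that by (cases "multiplicity p n") (auto simp: prime_factors_multiplicity)
  then have "n = (\<Prod>p\<in>prime_factors n. p ^ (multiplicity p n - 1) * p)"
    using prod_prime_factors[OF assms] by simp
  then show ?thesis by (simp add: prod.distrib)
qed

lemma of_nat_le_ratio_bound:
  fixes i a n p q M R :: nat
  assumes "i \<le> n div p + 2 * R" and "n div p \<le> a" and "p dvd n" and "n = M * (q * R)"
    and "p > 0" and "q > 0" and "M > 0"
  shows "real i \<le> (1 + 2 * (real p / real q) * (1 / real M)) * real a"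
proof -
  define c where "c = 1 + 2 * (real p / real q) * (1 / real M)"
  have div: "real (n div p) = real n / real p" using assms(3) by (simp add: real_of_nat_div)
  have "real i \<le> real (n div p + 2 * R)" using assms(1) by (simp only: of_nat_le_iff)
  also have "\<dots> = real n / real p + 2 * real R" using div by simp
  also have "\<dots> = c * (real n / real p)" using assms(4-7) by (simp add: c_def field_simps)
  also have "\<dots> \<le> c * real a" using assms(2) div by (intro mult_left_mono) (simp_all add: c_def)
  finally show ?thesis by (simp add: c_def)
qed

theorem corollary5p5:
  fixes n :: nat
  assumes "n \<ge> 2"
  shows "real (IR_X n) \<le>
    (1 + 2 * (real (Min (prime_factors n)) / real (Max (prime_factors n)))
           * (1 / real (\<Prod>p\<in>prime_factors n. p ^ (multiplicity p n - 1))))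
    * real (alpha_X n)"
proof -
  let ?P = "prime_factors n" and ?q = "Max (prime_factors n)"
  let ?M = "\<Prod>p\<in>?P. p ^ (multiplicity p n - 1)"
  have p\<^sub>1: "Min ?P \<in> ?P" using Min_prime_factors_in[OF assms] .
  then have "?P \<noteq> {}" by auto
  then have q: "?q \<in> ?P" by (rule Max_in[OF finite_set_mset])
  show ?thesis
  proof (rule of_nat_le_ratio_bound[where R = "\<Prod>(?P - {?q})"])
    show "IR_X n \<le> n div Min ?P + 2 * \<Prod>(?P - {?q})" using IR_X_le[OF assms q] .
    show "n div Min ?P \<le> alpha_X n" using alpha_X_ge[OF assms] .
    show "n = ?M * (?q * \<Prod>(?P - {?q}))"
      using prod_prime_factors_pred_mult[of n] prod.remove[OF _ q, of id] assms by simp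
    show "Min ?P dvd n" "Min ?P > 0" "?q > 0" using p\<^sub>1 q by (auto intro: in_prime_factors_imp_gt_0)
    show "?M > 0" by (intro prod_pos) (auto intro: in_prime_factors_imp_gt_0)
  qed
qed

end
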